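(* Let $G = N \rtimes H$ with $N, H$ finite abelian groups. Let $P_N$ be the idempotent eigenbasis of $\mathbb{C}[N]$, let $\mathcal{O}_\alpha$ be an $H$-orbit in $P_N$ (under conjugation), $H_\alpha$ the stabilizer in $H$ of an element of $\mathcal{O}_\alpha$, and $\{u_1,\dots,u_{|H_\alpha|}\}$ the idempotent eigenbasis of $\mathbb{C}[H_\alpha]$. Then for every $v_i \in \mathcal{O}_\alpha$ and every $1 \le p \le |H_\alpha|$, the element $v_iu_p$ is a primitive idempotent of $\mathbb{C}[G]$.
   Context: $N$ is a normal subgroup and $H$ acts on $N$ by conjugation, $G = NH$, $N\cap H = \{e\}$; $\mathbb{C}[N]$, $\mathbb{C}[H_\alpha]$ are regarded as subalgebras of $\mathbb{C}[G]$. For a finite abelian group $K$, the idempotent eigenbasis of $\mathbb{C}[K]$ is the unique basis $\{J_1,\dots,J_{|K|}\}$ of $\mathbb{C}[K]$ consisting of simultaneous eigenvectors of left multiplication by all elements of $\mathbb{C}[K]$ and satisfying $J_p^2 = J_p$, $J_pJ_q = 0$ for $p\neq q$. Conjugation by $h\in H$ is an algebra automorphism of $\mathbb{C}[N]$ and therefore permutes $P_N$; since $H$ is abelian all elements of an orbit have the same stabilizer. An idempotent $u$ is primitive if it cannot be written as $u = u_1+u_2$ with $u_1,u_2$ nonzero idempotents satisfying $u_1u_2=u_2u_1=0$. *)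

theory Defs
  imports "HOL-Algebra.Algebra"
begin

text \<open>The complex group algebra of a finite group G is modelled as complex-valued
functions on the carrier; C[K] for a subgroup K is the set of functions supported on K.\<close>

definition grp_alg :: "('a, 'b) monoid_scheme \<Rightarrow> 'a set \<Rightarrow> ('a \<Rightarrow> complex) set" where
  "grp_alg G K = {f. \<forall>x. x \<notin> K \<longrightarrow> f x = 0}"

definition conv :: "('a, 'b) monoid_scheme \<Rightarrow> ('a \<Rightarrow> complex) \<Rightarrow> ('a \<Rightarrow> complex) \<Rightarrow> 'a \<Rightarrow> complex" where
  "conv G f g = (\<lambda>x. if x \<in> carrier G
      then (\<Sum>y\<in>carrier G. f y * g (inv\<^bsub>G\<^esub> y \<otimes>\<^bsub>G\<^esub> x)) else 0)"

definition delta :: "'a \<Rightarrow> 'a \<Rightarrow> complex" where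
  "delta h = (\<lambda>x. if x = h then 1 else 0)"

definition alg_conj :: "('a, 'b) monoid_scheme \<Rightarrow> 'a \<Rightarrow> ('a \<Rightarrow> complex) \<Rightarrow> 'a \<Rightarrow> complex" where
  "alg_conj G h f = conv G (conv G (delta h) f) (delta (inv\<^bsub>G\<^esub> h))"

definition stabilizer_alg :: "('a, 'b) monoid_scheme \<Rightarrow> 'a set \<Rightarrow> ('a \<Rightarrow> complex) \<Rightarrow> 'a set" where
  "stabilizer_alg G H v = {h \<in> H. alg_conj G h v = v}"

definition orbit_alg :: "('a, 'b) monoid_scheme \<Rightarrow> 'a set \<Rightarrow> ('a \<Rightarrow> complex) \<Rightarrow> ('a \<Rightarrow> complex) set" where
  "orbit_alg G H v = (\<lambda>h. alg_conj G h v) ` H"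

definition idem_eigenbasis :: "('a, 'b) monoid_scheme \<Rightarrow> 'a set \<Rightarrow> ('a \<Rightarrow> complex) set \<Rightarrow> bool" where
  "idem_eigenbasis G K P \<longleftrightarrow>
     finite P \<and> P \<subseteq> grp_alg G K \<and>
     (\<forall>f \<in> grp_alg G K. \<exists>c. f = (\<lambda>x. \<Sum>J\<in>P. c J * J x)) \<and>
     (\<forall>c. (\<lambda>x. \<Sum>J\<in>P. c J * J x) = (\<lambda>x. 0) \<longrightarrow> (\<forall>J\<in>P. c J = 0)) \<and>
     (\<forall>J\<in>P. \<forall>a \<in> grp_alg G K. \<exists>l::complex. conv G a J = (\<lambda>x. l * J x)) \<and>
     (\<forall>J\<in>P. conv G J J = J) \<and>
     (\<forall>J\<in>P. \<forall>J'\<in>P. J \<noteq> J' \<longrightarrow> conv G J J' = (\<lambda>x. 0))"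

definition idempotent_alg :: "('a, 'b) monoid_scheme \<Rightarrow> ('a \<Rightarrow> complex) \<Rightarrow> bool" where
  "idempotent_alg G e \<longleftrightarrow> e \<in> grp_alg G (carrier G) \<and> conv G e e = e"

definition primitive_idempotent :: "('a, 'b) monoid_scheme \<Rightarrow> ('a \<Rightarrow> complex) \<Rightarrow> bool" where
  "primitive_idempotent G e \<longleftrightarrow> idempotent_alg G e \<and>
     \<not> (\<exists>u1 u2. idempotent_alg G u1 \<and> idempotent_alg G u2 \<and>
          u1 \<noteq> (\<lambda>x. 0) \<and> u2 \<noteq> (\<lambda>x. 0) \<and>
          conv G u1 u2 = (\<lambda>x. 0) \<and> conv G u2 u1 = (\<lambda>x. 0) \<and>
          e = (\<lambda>x. u1 x + u2 x))"

end

theory Submission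
  imports Defs
begin

(*
  For K normal abelian, conjugates of eigen-idempotents are again
     eigen-idempotents and distinct ones are orthogonal, so v delta h v = 0 unless h fixes v.
  4. Corner criterion: an idempotent e with e f e \<in> C e for all f is primitive; it suffices
     to check f = delta g.
  5. In the orbit setting, e = v u = u v, and for g = n h (n \<in> N, h \<in> H) the element
     e delta g e is a multiple of e: delta n acts on v by a scalar, and h either lies in S
     (then delta h acts on u by a scalar) or moves v (then v delta h v = 0).
  The theorem follows since members of the orbit of v0 have the same stabilizer (H abelian).
*)

locale finite_group_alg = group +
  assumes finite_carrier: "finite (carrier G)"
begin

section \<open>Convolution calculus in C[G]\<close>

lemma conv_closed: "conv G f g \<in> grp_alg G (carrier G)"
  by (simp add: grp_alg_def conv_def)

lemma grp_alg_mono: "K \<subseteq> carrier G \<Longrightarrow> f \<in> grp_alg G K \<Longrightarrow> f \<in> grp_alg G (carrier G)"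
  by (auto simp: grp_alg_def)

lemma conv_assoc: "conv G (conv G f g) k = conv G f (conv G g k)"
proof
  fix x
  show "conv G (conv G f g) k x = conv G f (conv G g k) x"
  proof (cases "x \<in> carrier G")
    case False thus ?thesis by (simp add: conv_def)
  next
    case x: True
    have "conv G (conv G f g) k x
        = (\<Sum>y\<in>carrier G. (\<Sum>z\<in>carrier G. f z * g (inv z \<otimes> y)) * k (inv y \<otimes> x))"
      using x by (simp add: conv_def)
    also have "\<dots> = (\<Sum>z\<in>carrier G. f z * (\<Sum>y\<in>carrier G. g (inv z \<otimes> y) * k (inv y \<otimes> x)))"
      by (simp add: sum_distrib_left sum_distrib_right mult.assoc) (rule sum.swap)
    also have "\<dots> = (\<Sum>z\<in>carrier G. f z * (\<Sum>w\<in>carrier G. g w * k (inv w \<otimes> (inv z \<otimes> x))))"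
    proof (rule sum.cong[OF refl])
      fix z assume z: "z \<in> carrier G"
      \<comment> \<open>substitute y = z w in the inner sum\<close>
      have "(\<Sum>y\<in>carrier G. g (inv z \<otimes> y) * k (inv y \<otimes> x))
          = (\<Sum>w\<in>carrier G. g (inv z \<otimes> (z \<otimes> w)) * k (inv (z \<otimes> w) \<otimes> x))"
        by (rule sum.reindex_bij_witness[where j="\<lambda>y. inv z \<otimes> y" and i="\<lambda>w. z \<otimes> w"])
          (use z in \<open>auto simp: m_assoc[symmetric]\<close>)
      also have "\<dots> = (\<Sum>w\<in>carrier G. g w * k (inv w \<otimes> (inv z \<otimes> x)))"
        using z x by (intro sum.cong) (auto simp: m_assoc[symmetric] inv_mult_group)
      finally show "f z * (\<Sum>y\<in>carrier G. g (inv z \<otimes> y) * k (inv y \<otimes> x))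
          = f z * (\<Sum>w\<in>carrier G. g w * k (inv w \<otimes> (inv z \<otimes> x)))" by simp
    qed
    also have "\<dots> = conv G f (conv G g k) x"
      using x by (simp add: conv_def)
    finally show ?thesis .
  qed
qed

lemma conv_sum_right:
  "finite T \<Longrightarrow> conv G f (\<lambda>x. \<Sum>b\<in>T. c b * k b x) = (\<lambda>x. \<Sum>b\<in>T. c b * conv G f (k b) x)"
  by (rule ext) (simp add: conv_def sum_distrib_left mult_ac sum.swap[of _ T])

lemma conv_sum_left:
  "finite T \<Longrightarrow> conv G (\<lambda>x. \<Sum>b\<in>T. c b * k b x) f = (\<lambda>x. \<Sum>b\<in>T. c b * conv G (k b) f x)"
  by (rule ext) (simp add: conv_def sum_distrib_left sum_distrib_right mult_ac sum.swap[of _ T])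

lemma conv_smult_left: "conv G (\<lambda>x. c * f x) g = (\<lambda>x. c * conv G f g x)"
  by (rule ext) (simp add: conv_def sum_distrib_left mult_ac)

lemma conv_smult_right: "conv G f (\<lambda>x. c * g x) = (\<lambda>x. c * conv G f g x)"
  by (rule ext) (simp add: conv_def sum_distrib_left mult_ac)

lemma conv_add_left: "conv G (\<lambda>x. f x + g x) k = (\<lambda>x. conv G f k x + conv G g k x)"
  by (rule ext) (simp add: conv_def sum.distrib distrib_right)

lemma conv_add_right: "conv G k (\<lambda>x. f x + g x) = (\<lambda>x. conv G k f x + conv G k g x)"
  by (rule ext) (simp add: conv_def sum.distrib distrib_left)

lemma conv_zero_left: "conv G (\<lambda>x. 0) g = (\<lambda>x. 0)"
  by (rule ext) (simp add: conv_def)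

lemma conv_zero_right: "conv G f (\<lambda>x. 0) = (\<lambda>x. 0)"
  by (rule ext) (simp add: conv_def)

lemma conv_delta_left:
  assumes a: "a \<in> carrier G"
  shows "conv G (delta a) f = (\<lambda>x. if x \<in> carrier G then f (inv a \<otimes> x) else 0)"
proof
  fix x
  show "conv G (delta a) f x = (if x \<in> carrier G then f (inv a \<otimes> x) else 0)"
  proof (cases "x \<in> carrier G")
    case True
    have "conv G (delta a) f x = (\<Sum>y\<in>carrier G. if y = a then f (inv y \<otimes> x) else 0)"
      using True a unfolding conv_def delta_def by (auto intro!: sum.cong)
    then show ?thesis using True a finite_carrier by simp
  qed (simp add: conv_def)
qed

lemma conv_delta_right:
  assumes a: "a \<in> carrier G"
  shows "conv G f (delta a) = (\<lambda>x. if x \<in> carrier G then f (x \<otimes> inv a) else 0)"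
proof
  fix x
  show "conv G f (delta a) x = (if x \<in> carrier G then f (x \<otimes> inv a) else 0)"
  proof (cases "x \<in> carrier G")
    case True
    have "conv G f (delta a) x = (\<Sum>y\<in>carrier G. if y = x \<otimes> inv a then f y else 0)"
      using True a unfolding conv_def delta_def
      by (auto intro!: sum.cong simp: inv_solve_left' inv_solve_right)
    then show ?thesis using True a finite_carrier by simp
  qed (simp add: conv_def)
qed

lemma delta_mult:
  "a \<in> carrier G \<Longrightarrow> b \<in> carrier G \<Longrightarrow> conv G (delta a) (delta b) = delta (a \<otimes> b)"
  by (rule ext) (simp add: conv_delta_left, auto simp: delta_def inv_solve_left')

lemma delta_one_left: "f \<in> grp_alg G (carrier G) \<Longrightarrow> conv G (delta \<one>) f = f"
  by (rule ext) (auto simp: conv_delta_left grp_alg_def)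

lemma delta_in_grp_alg: "g \<in> K \<Longrightarrow> delta g \<in> grp_alg G K"
  by (simp add: grp_alg_def delta_def)

lemma delta_expansion:
  assumes "K \<subseteq> carrier G" "f \<in> grp_alg G K"
  shows "f = (\<lambda>x. \<Sum>b\<in>K. f b * delta b x)"
proof
  fix x
  have fin: "finite K" using assms finite_carrier finite_subset by blast
  have "(\<Sum>b\<in>K. f b * delta b x) = (\<Sum>b\<in>K. if b = x then f b else 0)"
    by (rule sum.cong) (auto simp: delta_def)
  also have "\<dots> = f x" using fin assms(2) by (simp add: sum.delta' grp_alg_def)
  finally show "f x = (\<Sum>b\<in>K. f b * delta b x)" by simp
qed

lemma conv_commute_via_deltas:
  assumes K: "K \<subseteq> carrier G" and deltas: "\<forall>b\<in>K. conv G f (delta b) = conv G (delta b) f"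
    and g: "g \<in> grp_alg G K"
  shows "conv G f g = conv G g f"
proof -
  have fin: "finite K" using K finite_carrier finite_subset by blast
  have "conv G f g = (\<lambda>x. \<Sum>b\<in>K. g b * conv G f (delta b) x)"
    by (subst delta_expansion[OF K g]) (rule conv_sum_right[OF fin])
  also have "\<dots> = (\<lambda>x. \<Sum>b\<in>K. g b * conv G (delta b) f x)"
    using deltas by simp
  also have "\<dots> = conv G g f"
    by (subst (2) delta_expansion[OF K g]) (rule conv_sum_left[OF fin, symmetric])
  finally show ?thesis .
qed

lemma conv_commute_abelian:
  assumes K: "K \<subseteq> carrier G" and K_comm: "\<forall>x\<in>K. \<forall>y\<in>K. x \<otimes> y = y \<otimes> x"
    and a: "a \<in> grp_alg G K" and b: "b \<in> grp_alg G K"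
  shows "conv G a b = conv G b a"
proof -
  have "conv G (delta n) a = conv G a (delta n)" if n: "n \<in> K" for n
  proof (rule conv_commute_via_deltas[OF K _ a], intro ballI)
    fix m assume m: "m \<in> K"
    have "n \<in> carrier G" "m \<in> carrier G" using n m K by auto
    moreover have "n \<otimes> m = m \<otimes> n" using K_comm n m by blast
    ultimately show "conv G (delta n) (delta m) = conv G (delta m) (delta n)"
      by (simp add: delta_mult)
  qed
  then show ?thesis by (intro conv_commute_via_deltas[OF K _ b]) auto
qed

section \<open>Conjugation\<close>

lemma alg_conj_eq:
  "h \<in> carrier G \<Longrightarrow> alg_conj G h f = (\<lambda>x. if x \<in> carrier G then f (inv h \<otimes> x \<otimes> h) else 0)"
  by (rule ext) (simp add: alg_conj_def conv_delta_left conv_delta_right m_assoc)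

lemma alg_conj_closed: "alg_conj G h f \<in> grp_alg G (carrier G)"
  by (simp add: alg_conj_def conv_closed)

lemma alg_conj_conv:
  assumes h: "h \<in> carrier G"
  shows "alg_conj G h (conv G a b) = conv G (alg_conj G h a) (alg_conj G h b)"
proof -
  have cancel: "conv G (delta (inv h)) (conv G (delta h) z) = z" if "z \<in> grp_alg G (carrier G)" for z
    using h that by (simp add: conv_assoc[symmetric] delta_mult delta_one_left)
  show ?thesis using h by (simp add: alg_conj_def conv_assoc cancel conv_closed)
qed

lemma alg_conj_comp:
  "h \<in> carrier G \<Longrightarrow> k \<in> carrier G \<Longrightarrow> alg_conj G h (alg_conj G k f) = alg_conj G (h \<otimes> k) f"
  by (rule ext) (simp add: alg_conj_eq inv_mult_group m_assoc)

lemma alg_conj_one: "f \<in> grp_alg G (carrier G) \<Longrightarrow> alg_conj G \<one> f = f"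
  by (rule ext) (auto simp: alg_conj_eq grp_alg_def)

lemma alg_conj_inv_cancel:
  "k \<in> carrier G \<Longrightarrow> f \<in> grp_alg G (carrier G) \<Longrightarrow> alg_conj G (inv k) (alg_conj G k f) = f"
  by (simp add: alg_conj_comp alg_conj_one)

lemma alg_conj_inv_cancel':
  "k \<in> carrier G \<Longrightarrow> f \<in> grp_alg G (carrier G) \<Longrightarrow> alg_conj G k (alg_conj G (inv k) f) = f"
  using alg_conj_inv_cancel[of "inv k" f] by simp

lemma alg_conj_smult:
  "h \<in> carrier G \<Longrightarrow> alg_conj G h (\<lambda>x. c * f x) = (\<lambda>x. c * alg_conj G h f x)"
  by (rule ext) (simp add: alg_conj_eq)

lemma delta_conv_alg_conj:
  assumes h: "h \<in> carrier G" and f: "f \<in> grp_alg G (carrier G)"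
  shows "conv G (delta h) f = conv G (alg_conj G h f) (delta h)"
  by (rule ext) (use h f in \<open>auto simp: alg_conj_eq conv_delta_left conv_delta_right m_assoc grp_alg_def\<close>)

lemma alg_conj_normal:
  assumes N: "N \<lhd> G" and h: "h \<in> carrier G" and f: "f \<in> grp_alg G N"
  shows "alg_conj G h f \<in> grp_alg G N"
  unfolding grp_alg_def
proof (intro CollectI allI impI)
  fix x assume x: "x \<notin> N"
  show "alg_conj G h f x = 0"
  proof (cases "x \<in> carrier G")
    case True
    have "inv h \<otimes> x \<otimes> h \<notin> N"
    proof
      assume "inv h \<otimes> x \<otimes> h \<in> N"
      then have "h \<otimes> (inv h \<otimes> x \<otimes> h) \<otimes> inv h \<in> N"
        using normal.inv_op_closed2[OF N h] by blast
      also have "h \<otimes> (inv h \<otimes> x \<otimes> h) \<otimes> inv h = x"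
        using h True by (metis m_assoc inv_closed m_closed r_inv l_inv r_one l_one)
      finally show False using x by simp
    qed
    then show ?thesis using h f True by (simp add: alg_conj_eq grp_alg_def)
  qed (simp add: alg_conj_eq h)
qed

lemma stabilizer_orbit_invariant:
  assumes H: "subgroup H G" and H_comm: "\<forall>x\<in>H. \<forall>y\<in>H. x \<otimes> y = y \<otimes> x"
    and v0: "v0 \<in> grp_alg G (carrier G)" and w: "w \<in> orbit_alg G H v0"
  shows "stabilizer_alg G H w = stabilizer_alg G H v0"
proof -
  obtain k where k: "k \<in> H" and w_eq: "w = alg_conj G k v0"
    using w unfolding orbit_alg_def by blast
  have kc: "k \<in> carrier G" using H k by (rule subgroup.mem_carrier)
  have "alg_conj G h w = w \<longleftrightarrow> alg_conj G h v0 = v0" if h: "h \<in> H" for h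
  proof -
    have hc: "h \<in> carrier G" using H h by (rule subgroup.mem_carrier)
    have swap: "alg_conj G h w = alg_conj G k (alg_conj G h v0)"
      unfolding w_eq alg_conj_comp[OF hc kc] alg_conj_comp[OF kc hc] using H_comm h k by simp
    \<comment> \<open>conjugation by k is injective\<close>
    have "alg_conj G k (alg_conj G h v0) = alg_conj G k v0 \<longleftrightarrow> alg_conj G h v0 = v0"
      using alg_conj_inv_cancel[OF kc v0] alg_conj_inv_cancel[OF kc alg_conj_closed] by metis
    then show ?thesis using swap w_eq by simp
  qed
  then show ?thesis by (auto simp: stabilizer_alg_def)
qed

section \<open>Eigen-idempotents\<close>

definition eigen_idempotent :: "'a set \<Rightarrow> ('a \<Rightarrow> complex) \<Rightarrow> bool" where
  "eigen_idempotent K v \<longleftrightarrow> v \<in> grp_alg G K \<and> conv G v v = v \<and>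
     (\<forall>a\<in>grp_alg G K. \<exists>l. conv G a v = (\<lambda>x. l * v x))"

lemma idem_eigenbasis_eigen_idempotent:
  assumes P: "idem_eigenbasis G K P" and v: "v \<in> P"
  shows "eigen_idempotent K v"
proof -
  have "P \<subseteq> grp_alg G K" and "\<forall>J\<in>P. conv G J J = J"
    and "\<forall>J\<in>P. \<forall>a \<in> grp_alg G K. \<exists>l. conv G a J = (\<lambda>x. l * J x)"
    using P unfolding idem_eigenbasis_def by simp_all
  with v show ?thesis unfolding eigen_idempotent_def by blast
qed

lemma scalar_cancel:
  assumes "(\<lambda>x. a * f x) = (\<lambda>x. b * f x)" and "f \<noteq> (\<lambda>x. 0)"
  shows "a = (b::complex)"
proof -
  obtain x where "f x \<noteq> 0" using assms(2) by auto
  moreover have "a * f x = b * f x" using fun_cong[OF assms(1), of x] by simp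
  ultimately show ?thesis by simp
qed

lemma idempotent_scalar:
  assumes f: "conv G f f = f" "f \<noteq> (\<lambda>x. 0)" and cf: "conv G (\<lambda>x. c * f x) (\<lambda>x. c * f x) = (\<lambda>x. c * f x)"
  shows "c = 0 \<or> c = 1"
proof -
  have "(\<lambda>x. (c * c) * f x) = (\<lambda>x. c * f x)"
    using cf f(1) by (simp add: conv_smult_left conv_smult_right mult.assoc)
  then have "c * c = c" using f(2) by (rule scalar_cancel)
  then show ?thesis by (metis mult_cancel_right2 mult_eq_0_iff)
qed

lemma eigen_idempotent_conj:
  assumes N: "N \<lhd> G" and v: "eigen_idempotent N v" and k: "k \<in> carrier G"
  shows "eigen_idempotent N (alg_conj G k v)"
proof -
  have Nc: "N \<subseteq> carrier G" using N normal_imp_subgroup subgroup.subset by blast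
  have vN: "v \<in> grp_alg G N" and vv: "conv G v v = v"
    and eig: "\<forall>a\<in>grp_alg G N. \<exists>l. conv G a v = (\<lambda>x. l * v x)"
    using v unfolding eigen_idempotent_def by blast+
  have "\<exists>l. conv G a (alg_conj G k v) = (\<lambda>x. l * alg_conj G k v x)" if a: "a \<in> grp_alg G N" for a
  proof -
    \<comment> \<open>transport the eigenvalue equation of the conjugated element a back to v\<close>
    have "alg_conj G (inv k) a \<in> grp_alg G N" by (rule alg_conj_normal[OF N inv_closed[OF k] a])
    then obtain l where l: "conv G (alg_conj G (inv k) a) v = (\<lambda>x. l * v x)" using eig by blast
    have "conv G a (alg_conj G k v) = conv G (alg_conj G k (alg_conj G (inv k) a)) (alg_conj G k v)"
      by (simp only: alg_conj_inv_cancel'[OF k grp_alg_mono[OF Nc a]])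
    also have "\<dots> = alg_conj G k (conv G (alg_conj G (inv k) a) v)"
      by (rule alg_conj_conv[OF k, symmetric])
    also have "\<dots> = (\<lambda>x. l * alg_conj G k v x)"
      by (simp only: l alg_conj_smult[OF k])
    finally show ?thesis by (rule exI)
  qed
  moreover have "conv G (alg_conj G k v) (alg_conj G k v) = alg_conj G k v"
    using alg_conj_conv[OF k, of v v, symmetric] vv by (simp only:)
  ultimately show ?thesis
    unfolding eigen_idempotent_def using alg_conj_normal[OF N k vN] by blast
qed

lemma eigen_idempotents_orthogonal:
  assumes K: "K \<subseteq> carrier G" and K_comm: "\<forall>x\<in>K. \<forall>y\<in>K. x \<otimes> y = y \<otimes> x"
    and v: "eigen_idempotent K v" and w: "eigen_idempotent K w" and ne: "v \<noteq> w"
  shows "conv G w v = (\<lambda>x. 0)"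
proof (cases "v = (\<lambda>x. 0)")
  case True then show ?thesis by (simp add: conv_zero_right)
next
  case v_nz: False
  have vK: "v \<in> grp_alg G K" "conv G v v = v" and wK: "w \<in> grp_alg G K" "conv G w w = w"
    using v w by (auto simp: eigen_idempotent_def)
  obtain l where l: "conv G w v = (\<lambda>x. l * v x)"
    using v wK(1) unfolding eigen_idempotent_def by blast
  obtain m where m: "conv G v w = (\<lambda>x. m * w x)"
    using w vK(1) unfolding eigen_idempotent_def by blast
  have comm: "conv G w v = conv G v w" by (rule conv_commute_abelian[OF K K_comm wK(1) vK(1)])
  have "conv G (conv G w v) (conv G w v) = conv G w (conv G (conv G v w) v)"
    by (simp add: conv_assoc)
  also have "\<dots> = conv G (conv G w w) (conv G v v)"
    by (simp add: comm[symmetric] conv_assoc)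
  finally have wv_idem: "conv G (conv G w v) (conv G w v) = conv G w v"
    using vK(2) wK(2) by simp
  have "l = 0 \<or> l = 1" using idempotent_scalar[OF vK(2) v_nz] wv_idem l by simp
  moreover have "l \<noteq> 1"
  proof
    assume "l = 1"
    then have "v = conv G w v" using l by simp
    also have "\<dots> = (\<lambda>x. m * w x)" using comm m by simp
    finally have v_eq: "v = (\<lambda>x. m * w x)" .
    then have "w \<noteq> (\<lambda>x. 0)" using v_nz by auto
    then have "m = 0 \<or> m = 1" using idempotent_scalar[OF wK(2)] vK(2) v_eq by simp
    then show False using v_eq v_nz ne by auto
  qed
  ultimately show ?thesis using l by simp
qed

lemma eigen_idempotent_moved_orthogonal:
  assumes N: "N \<lhd> G" and N_comm: "\<forall>x\<in>N. \<forall>y\<in>N. x \<otimes> y = y \<otimes> x"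
    and v: "eigen_idempotent N v" and h: "h \<in> carrier G" and moved: "alg_conj G h v \<noteq> v"
  shows "conv G v (conv G (delta h) v) = (\<lambda>x. 0)"
proof -
  have Nc: "N \<subseteq> carrier G" using N normal_imp_subgroup subgroup.subset by blast
  define w where "w = alg_conj G (inv h) v"
  have w: "eigen_idempotent N w"
    unfolding w_def by (rule eigen_idempotent_conj[OF N v]) (use h in simp)
  have vG: "v \<in> grp_alg G (carrier G)"
    using v grp_alg_mono[OF Nc] by (auto simp: eigen_idempotent_def)
  have hw: "alg_conj G h w = v" unfolding w_def using alg_conj_inv_cancel'[OF h vG] .
  have "w \<noteq> v" using moved hw by auto
  then have wv: "conv G w v = (\<lambda>x. 0)"
    using eigen_idempotents_orthogonal[OF Nc N_comm v w] by simp
  have "conv G v (conv G (delta h) v) = conv G (conv G (delta h) w) v"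
    using delta_conv_alg_conj[OF h alg_conj_closed, of "inv h" v] hw
    by (simp add: w_def conv_assoc)
  also have "\<dots> = (\<lambda>x. 0)" by (simp add: conv_assoc wv conv_zero_right)
  finally show ?thesis .
qed

section \<open>A criterion for primitivity\<close>

lemma corner_scalar_from_deltas:
  assumes corner: "\<forall>g\<in>carrier G. \<exists>c. conv G e (conv G (delta g) e) = (\<lambda>x. c * e x)"
    and f: "f \<in> grp_alg G (carrier G)"
  shows "\<exists>c. conv G e (conv G f e) = (\<lambda>x. c * e x)"
proof -
  obtain K where K: "\<forall>g\<in>carrier G. conv G e (conv G (delta g) e) = (\<lambda>x. K g * e x)"
    using bchoice[OF corner] by blast
  have "conv G e (conv G f e) = (\<lambda>x. \<Sum>b\<in>carrier G. f b * conv G e (conv G (delta b) e) x)"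
    by (subst delta_expansion[OF subset_refl f])
      (simp add: conv_sum_left[OF finite_carrier] conv_sum_right[OF finite_carrier])
  also have "\<dots> = (\<lambda>x. (\<Sum>b\<in>carrier G. f b * K b) * e x)"
    using K by (simp add: sum_distrib_right mult.assoc)
  finally show ?thesis by (rule exI)
qed

text \<open>An idempotent e whose corner algebra e C[G] e is C e is primitive: a splitting
  e = u1 + u2 gives u1 = e u1 e = c e with c \<in> {0, 1}, so u1 or u2 vanishes.\<close>

lemma primitive_if_corner_scalar:
  assumes eG: "e \<in> grp_alg G (carrier G)" and ee: "conv G e e = e"
    and corner: "\<forall>g\<in>carrier G. \<exists>c. conv G e (conv G (delta g) e) = (\<lambda>x. c * e x)"
  shows "primitive_idempotent G e"
  unfolding primitive_idempotent_def
proof (intro conjI notI)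
  show "idempotent_alg G e" using eG ee by (simp add: idempotent_alg_def)
next
  assume "\<exists>u1 u2. idempotent_alg G u1 \<and> idempotent_alg G u2 \<and>
        u1 \<noteq> (\<lambda>x. 0) \<and> u2 \<noteq> (\<lambda>x. 0) \<and>
        conv G u1 u2 = (\<lambda>x. 0) \<and> conv G u2 u1 = (\<lambda>x. 0) \<and> e = (\<lambda>x. u1 x + u2 x)"
  then obtain u1 u2 where u1: "u1 \<in> grp_alg G (carrier G)" "conv G u1 u1 = u1"
    and u2: "conv G u2 u2 = u2" and nz: "u1 \<noteq> (\<lambda>x. 0)" "u2 \<noteq> (\<lambda>x. 0)"
    and orth: "conv G u1 u2 = (\<lambda>x. 0)" "conv G u2 u1 = (\<lambda>x. 0)"
    and e_split: "e = (\<lambda>x. u1 x + u2 x)"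
    unfolding idempotent_alg_def by blast
  obtain c where c: "conv G e (conv G u1 e) = (\<lambda>x. c * e x)"
    using corner_scalar_from_deltas[OF corner u1(1)] by blast
  have "conv G e (conv G u1 e) = u1"
    using e_split u1(2) orth by (simp add: conv_add_left conv_add_right)
  then have u1_eq: "u1 = (\<lambda>x. c * e x)" using c by simp
  then have "e \<noteq> (\<lambda>x. 0)" using nz(1) by auto
  then have "c = 0 \<or> c = 1" using idempotent_scalar[OF ee] u1(2) u1_eq by simp
  then show False
  proof
    assume "c = 1"
    then have "u1 = e" using u1_eq by simp
    then have "u2 x = 0" for x using fun_cong[OF e_split, of x] by simp
    then show False using nz(2) by auto
  qed (use u1_eq nz(1) in simp)
qed

end

section \<open>The orbit setting: G = N H\<close>

locale orbit_setting = finite_group_alg +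
  fixes N H :: "'a set" and v u :: "'a \<Rightarrow> complex"
  assumes N_normal: "N \<lhd> G" and N_comm: "\<forall>x\<in>N. \<forall>y\<in>N. x \<otimes> y = y \<otimes> x"
    and H_subgroup: "subgroup H G" and product: "N <#> H = carrier G"
    and v: "eigen_idempotent N v"
    and u: "eigen_idempotent (stabilizer_alg G H v) u"
begin

abbreviation S :: "'a set" where "S \<equiv> stabilizer_alg G H v"

lemma N_carrier: "N \<subseteq> carrier G"
  using N_normal normal_imp_subgroup subgroup.subset by blast

lemma S_carrier: "S \<subseteq> carrier G"
  using H_subgroup subgroup.subset by (auto simp: stabilizer_alg_def)

lemma v_carrier: "v \<in> grp_alg G (carrier G)"
  using v grp_alg_mono[OF N_carrier] by (auto simp: eigen_idempotent_def)

text \<open>Point masses of the stabilizer commute with v, hence v commutes with u.\<close>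

lemma stabilizer_delta_commute: "s \<in> S \<Longrightarrow> conv G v (delta s) = conv G (delta s) v"
  using delta_conv_alg_conj[OF _ v_carrier] S_carrier by (auto simp: stabilizer_alg_def)

lemma vu_commute: "conv G v u = conv G u v"
  using conv_commute_via_deltas[OF S_carrier _, of v u] stabilizer_delta_commute u
  by (auto simp: eigen_idempotent_def)

lemma vu_idempotent: "conv G (conv G v u) (conv G v u) = conv G v u"
proof -
  have "conv G (conv G v u) (conv G v u) = conv G v (conv G (conv G u v) u)"
    by (simp add: conv_assoc)
  also have "\<dots> = conv G (conv G v v) (conv G u u)"
    by (simp add: vu_commute[symmetric] conv_assoc)
  finally show ?thesis using u v by (simp add: eigen_idempotent_def)
qed

lemma u_absorbs_vu: "conv G u (conv G v u) = conv G v u"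
  using u by (simp add: vu_commute conv_assoc[symmetric] eigen_idempotent_def)

text \<open>delta n for n \<in> N acts on v by a scalar (on either side, as C[N] is commutative).\<close>

lemma normal_delta_scalar:
  assumes n: "n \<in> N"
  shows "\<exists>l. conv G v (delta n) = (\<lambda>x. l * v x)"
proof -
  have vN: "v \<in> grp_alg G N" using v by (simp add: eigen_idempotent_def)
  obtain l where "conv G (delta n) v = (\<lambda>x. l * v x)"
    using v delta_in_grp_alg[OF n] by (auto simp: eigen_idempotent_def)
  then show ?thesis
    using conv_commute_abelian[OF N_carrier N_comm vN delta_in_grp_alg[OF n]] by auto
qed

text \<open>For h \<in> H, v delta h (v u) is a multiple of v u: a scalar if h stabilizes v, zero otherwise.\<close>

lemma complement_delta_scalar:
  assumes h: "h \<in> H"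
  shows "\<exists>c. conv G v (conv G (delta h) (conv G v u)) = (\<lambda>x. c * conv G v u x)"
proof (cases "h \<in> S")
  case True
  obtain c where c: "conv G (delta h) u = (\<lambda>x. c * u x)"
    using u delta_in_grp_alg[OF True] unfolding eigen_idempotent_def by blast
  have "conv G v (conv G (delta h) (conv G v u)) = conv G (conv G v (delta h)) (conv G v u)"
    by (rule conv_assoc[symmetric])
  also have "\<dots> = conv G (delta h) (conv G (conv G v v) u)"
    by (simp add: stabilizer_delta_commute[OF True] conv_assoc)
  also have "\<dots> = conv G (conv G (delta h) u) v"
    using v by (simp add: eigen_idempotent_def vu_commute conv_assoc)
  also have "\<dots> = (\<lambda>x. c * conv G v u x)"
    using c by (simp add: conv_smult_left vu_commute)
  finally show ?thesis by (rule exI)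
next
  case False
  have hc: "h \<in> carrier G" using H_subgroup h by (rule subgroup.mem_carrier)
  have "alg_conj G h v \<noteq> v" using False h by (simp add: stabilizer_alg_def)
  then have "conv G v (conv G (delta h) v) = (\<lambda>x. 0)"
    by (rule eigen_idempotent_moved_orthogonal[OF N_normal N_comm v hc])
  then have "conv G v (conv G (delta h) (conv G v u)) = (\<lambda>x. 0)"
    by (simp add: conv_assoc[symmetric] conv_zero_left)
  then show ?thesis by (intro exI[of _ 0]) simp
qed

lemma vu_corner_scalar:
  assumes g: "g \<in> carrier G"
  shows "\<exists>c. conv G (conv G v u) (conv G (delta g) (conv G v u)) = (\<lambda>x. c * conv G v u x)"
proof -
  obtain n h where n: "n \<in> N" and h: "h \<in> H" and g_eq: "g = n \<otimes> h"
    using g product unfolding set_mult_def by blast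
  have nc: "n \<in> carrier G" using n N_carrier by auto
  have hc: "h \<in> carrier G" using H_subgroup h by (rule subgroup.mem_carrier)
  obtain l where l: "conv G v (delta n) = (\<lambda>x. l * v x)" using normal_delta_scalar[OF n] by blast
  obtain c where c: "conv G v (conv G (delta h) (conv G v u)) = (\<lambda>x. c * conv G v u x)"
    using complement_delta_scalar[OF h] by blast
  have "conv G (conv G v u) (conv G (delta g) (conv G v u))
      = conv G u (conv G (conv G v (delta n)) (conv G (delta h) (conv G v u)))"
    unfolding g_eq delta_mult[OF nc hc, symmetric] vu_commute by (simp add: conv_assoc)
  also have "\<dots> = (\<lambda>x. (l * c) * conv G u (conv G v u) x)"
    using l c by (simp add: conv_smult_left conv_smult_right conv_assoc mult.assoc)
  finally show ?thesis unfolding u_absorbs_vu by (rule exI)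
qed

theorem vu_primitive: "primitive_idempotent G (conv G v u)"
  by (rule primitive_if_corner_scalar[OF conv_closed vu_idempotent]) (simp add: vu_corner_scalar)

end

theorem mainTheorem6:
  fixes G :: "('a, 'b) monoid_scheme" and N H :: "'a set"
    and PN U :: "('a \<Rightarrow> complex) set" and v0 va vi u :: "'a \<Rightarrow> complex"
  assumes "group G" and "finite (carrier G)"
    and "N \<lhd> G" and "subgroup H G"
    and "N <#>\<^bsub>G\<^esub> H = carrier G" and "N \<inter> H = {\<one>\<^bsub>G\<^esub>}"
    and "\<forall>x\<in>N. \<forall>y\<in>N. x \<otimes>\<^bsub>G\<^esub> y = y \<otimes>\<^bsub>G\<^esub> x"
    and "\<forall>x\<in>H. \<forall>y\<in>H. x \<otimes>\<^bsub>G\<^esub> y = y \<otimes>\<^bsub>G\<^esub> x"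
    and "idem_eigenbasis G N PN"
    and "v0 \<in> PN"
    and "va \<in> orbit_alg G H v0"
    and "idem_eigenbasis G (stabilizer_alg G H va) U"
    and "vi \<in> orbit_alg G H v0"
    and "u \<in> U"
  shows "primitive_idempotent G (conv G vi u)"
proof -
  interpret finite_group_alg G
    using assms(1,2) by (simp add: finite_group_alg_def finite_group_alg_axioms_def)
  have Nc: "N \<subseteq> carrier G" by (rule subgroup.subset[OF normal_imp_subgroup[OF assms(3)]])
  have v0: "eigen_idempotent N v0" using idem_eigenbasis_eigen_idempotent assms(9,10) .
  then have v0G: "v0 \<in> grp_alg G (carrier G)"
    using grp_alg_mono[OF Nc] unfolding eigen_idempotent_def by blast
  obtain k where k: "k \<in> H" and vi_eq: "vi = alg_conj G k v0"
    using assms(13) unfolding orbit_alg_def by blast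
  have "k \<in> carrier G" using assms(4) k by (rule subgroup.mem_carrier)
  then have vi: "eigen_idempotent N vi"
    unfolding vi_eq by (rule eigen_idempotent_conj[OF assms(3) v0])
  \<comment> \<open>va and vi lie in the same H-orbit, so (H being abelian) they have the same stabilizer\<close>
  have "stabilizer_alg G H va = stabilizer_alg G H vi"
    using stabilizer_orbit_invariant[OF assms(4,8) v0G] assms(11,13) by simp
  then have u: "eigen_idempotent (stabilizer_alg G H vi) u"
    using idem_eigenbasis_eigen_idempotent[OF assms(12,14)] by simp
  have "orbit_setting G N H vi u"
    using assms(1-5,7) vi u
    by (simp add: orbit_setting_def orbit_setting_axioms_def finite_group_alg_def finite_group_alg_axioms_def)
  then show ?thesis by (rule orbit_setting.vu_primitive)
qed

end
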